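(* Let $n\ge 2$ and $r>2$ be integers, and let $u,v$ be vertices of $G(n,r)$ with graph distance $d_{G(n,r)}(u,v)\le 2$. Then the number of moves $b\in\mathcal{B}$ such that both $u+b$ and $v+b$ have all entries non-negative (i.e. $b$ is a valid move from both $u$ and $v$) is at least $\binom{n}{2}$.
   Context: For integers $n,r\ge 1$, $G(n,r)$ is the simple undirected graph whose vertices are the $n\times n$ matrices with non-negative integer entries all of whose row sums and column sums equal $r$. Let $e_{ij}$ be the $n\times n$ matrix with a $1$ in position $(i,j)$ and $0$ elsewhere, and let $\mathcal{B}=\{\pm(e_{ij}+e_{kl}-e_{il}-e_{kj}) : 1\le i<k\le n,\ 1\le j<l\le n\}$ (the Markov moves). Two vertices $u,v$ are adjacent iff $u-v\in\mathcal{B}$; distance is the usual shortest-path distance in this graph. *)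

theory Defs
  imports Main
begin

text \<open>n x n integer matrices are represented as functions nat => nat => int,
  indices 0..<n; entries outside the index range are required to be 0.\<close>

definition e_mat :: "nat \<Rightarrow> nat \<Rightarrow> nat \<Rightarrow> nat \<Rightarrow> int" where
  "e_mat i j = (\<lambda>a b. if a = i \<and> b = j then 1 else 0)"

definition is_vertex :: "nat \<Rightarrow> nat \<Rightarrow> (nat \<Rightarrow> nat \<Rightarrow> int) \<Rightarrow> bool" where
  "is_vertex n r M \<longleftrightarrow>
     (\<forall>a b. M a b \<ge> 0) \<and>
     (\<forall>a b. (a \<ge> n \<or> b \<ge> n) \<longrightarrow> M a b = 0) \<and>
     (\<forall>a<n. (\<Sum>b<n. M a b) = int r) \<and>
     (\<forall>b<n. (\<Sum>a<n. M a b) = int r)"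

definition markov_moves :: "nat \<Rightarrow> (nat \<Rightarrow> nat \<Rightarrow> int) set" where
  "markov_moves n = {(\<lambda>a b. s * (e_mat i j a b + e_mat k l a b - e_mat i l a b - e_mat k j a b)) | s i j k l.
      (s = 1 \<or> s = -1) \<and> i < k \<and> k < n \<and> j < l \<and> l < n}"

definition G_adj :: "nat \<Rightarrow> nat \<Rightarrow> (nat \<Rightarrow> nat \<Rightarrow> int) \<Rightarrow> (nat \<Rightarrow> nat \<Rightarrow> int) \<Rightarrow> bool" where
  "G_adj n r u v \<longleftrightarrow> is_vertex n r u \<and> is_vertex n r v \<and> (\<lambda>a b. u a b - v a b) \<in> markov_moves n"

definition G_dist_le :: "nat \<Rightarrow> nat \<Rightarrow> (nat \<Rightarrow> nat \<Rightarrow> int) \<Rightarrow> (nat \<Rightarrow> nat \<Rightarrow> int) \<Rightarrow> nat \<Rightarrow> bool" where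
  "G_dist_le n r u v d \<longleftrightarrow>
     (\<exists>k\<le>d. (u, v) \<in> ({(x, y). G_adj n r x y}) ^^ k)"

end

theory Submission
  imports Defs
begin

(* Let u, v be vertices of G(n,r) at distance at most 2 and call an entry common if it is positive
   in both u and v.  For common entries (i,j), (k,l) with i \<noteq> k and j \<noteq> l, the swap move that
   decreases (i,j), (k,l) and increases (i,l), (k,j) is a Markov move valid from both u and v, and
   the pair {(i,j),(k,l)} is recovered as the set of entries the move decreases.  Hence there are at
   least as many jointly valid moves as independent pairs of common entries.

   Along a walk of length d each row and column of the matrix changes by at most 2d in l1-norm, and
   u, v have row and column sums r > d, so every row and every column contains a common entry.

   The remaining step is combinatorial: a relation on an n x n grid that meets every row and every
   column has at least n choose 2 pairs of entries in different rows and columns. *)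

definition swap_move :: "nat \<Rightarrow> nat \<Rightarrow> nat \<Rightarrow> nat \<Rightarrow> nat \<Rightarrow> nat \<Rightarrow> int" where
  "swap_move i j k l = (\<lambda>a c. e_mat i l a c + e_mat k j a c - e_mat i j a c - e_mat k l a c)"

definition neg_support :: "(nat \<Rightarrow> nat \<Rightarrow> int) \<Rightarrow> (nat \<times> nat) set" where
  "neg_support b = {(a, c). b a c < 0}"

lemma neg_support_swap_move:
  assumes "i \<noteq> k" "j \<noteq> l"
  shows "neg_support (swap_move i j k l) = {(i, j), (k, l)}"
  using assms by (auto simp: neg_support_def swap_move_def e_mat_def)

lemma swap_move_sym: "swap_move i j k l = swap_move k l i j"
  by (auto simp: swap_move_def fun_eq_iff)

lemma swap_move_in_markov_moves_ordered:
  assumes "i < k" "k < n" "j < n" "l < n" "j \<noteq> l"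
  shows "swap_move i j k l \<in> markov_moves n"
proof (cases "j < l")
  case True
  have "swap_move i j k l =
      (\<lambda>a c. (-1) * (e_mat i j a c + e_mat k l a c - e_mat i l a c - e_mat k j a c))"
    by (auto simp: swap_move_def fun_eq_iff)
  then show ?thesis unfolding markov_moves_def using assms True by blast
next
  case False
  then have "l < j" using assms by simp
  have "swap_move i j k l =
      (\<lambda>a c. 1 * (e_mat i l a c + e_mat k j a c - e_mat i j a c - e_mat k l a c))"
    by (auto simp: swap_move_def fun_eq_iff)
  then show ?thesis unfolding markov_moves_def using assms \<open>l < j\<close> by blast
qed

lemma swap_move_in_markov_moves:
  assumes "i < n" "k < n" "j < n" "l < n" "i \<noteq> k" "j \<noteq> l"
  shows "swap_move i j k l \<in> markov_moves n"
proof (cases "i < k")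
  case True
  then show ?thesis using assms swap_move_in_markov_moves_ordered by blast
next
  case False
  then have "k < i" using assms by simp
  then show ?thesis
    using assms swap_move_in_markov_moves_ordered[of k i n l j] swap_move_sym by metis
qed

lemma swap_move_keeps_nonneg:
  assumes "\<forall>a c. w a c \<ge> 0" "w i j \<ge> 1" "w k l \<ge> 1" "i \<noteq> k" "j \<noteq> l"
  shows "w a c + swap_move i j k l a c \<ge> 0"
  using assms(1)[rule_format, of a c] assms(2-) by (auto simp: swap_move_def e_mat_def)

lemma finite_markov_moves: "finite (markov_moves n)"
proof -
  let ?move = "\<lambda>(s::int, i, j, k, l) a c.
    s * (e_mat i j a c + e_mat k l a c - e_mat i l a c - e_mat k j a c)"
  have "markov_moves n \<subseteq> ?move ` ({1, -1} \<times> {..<n} \<times> {..<n} \<times> {..<n} \<times> {..<n})"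
  proof
    fix b assume "b \<in> markov_moves n"
    then obtain s i j k l
      where b: "b = (\<lambda>a c. s * (e_mat i j a c + e_mat k l a c - e_mat i l a c - e_mat k j a c))"
        and idx: "s = 1 \<or> s = -1" "i < k" "k < n" "j < l" "l < n"
      unfolding markov_moves_def by blast
    show "b \<in> ?move ` ({1, -1} \<times> {..<n} \<times> {..<n} \<times> {..<n} \<times> {..<n})"
      by (rule image_eqI[where x = "(s, i, j, k, l)"]) (use b idx in auto)
  qed
  then show ?thesis by (rule finite_subset) auto
qed

lemma markov_move_abs_sums:
  assumes "b \<in> markov_moves n"
  shows "(\<Sum>c<n. \<bar>b a c\<bar>) \<le> 2" and "(\<Sum>a<n. \<bar>b a c\<bar>) \<le> 2"
proof -
  obtain s i j k l where b: "b = (\<lambda>a c. s * (e_mat i j a c + e_mat k l a c - e_mat i l a c - e_mat k j a c))"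
    and s: "s = 1 \<or> s = -1" and idx: "i < k" "k < n" "j < l" "l < n"
    using assms unfolding markov_moves_def by blast
  have abs_b: "\<bar>b a c\<bar> = \<bar>e_mat i j a c + e_mat k l a c - e_mat i l a c - e_mat k j a c\<bar>" for a c
    using s by (auto simp: b abs_mult)
  have "(\<Sum>c<n. \<bar>b a c\<bar>) \<le> (\<Sum>c<n. of_bool (c = j) + of_bool (c = l))"
    by (rule sum_mono) (use idx in \<open>auto simp: abs_b e_mat_def\<close>)
  also have "\<dots> = 2" using idx by (simp add: sum.distrib)
  finally show "(\<Sum>c<n. \<bar>b a c\<bar>) \<le> 2" .
  have "(\<Sum>a<n. \<bar>b a c\<bar>) \<le> (\<Sum>a<n. of_bool (a = i) + of_bool (a = k))"
    by (rule sum_mono) (use idx in \<open>auto simp: abs_b e_mat_def\<close>)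
  also have "\<dots> = 2" using idx by (simp add: sum.distrib)
  finally show "(\<Sum>a<n. \<bar>b a c\<bar>) \<le> 2" .
qed

lemma walk_abs_sums:
  assumes "(u, v) \<in> {(x, y). G_adj n r x y} ^^ d"
  shows "(\<Sum>c<n. \<bar>u a c - v a c\<bar>) \<le> 2 * int d \<and> (\<Sum>a<n. \<bar>u a c - v a c\<bar>) \<le> 2 * int d"
  using assms
proof (induction d arbitrary: v)
  case 0
  then show ?case by simp
next
  case (Suc d)
  then obtain w where uw: "(u, w) \<in> {(x, y). G_adj n r x y} ^^ d" and "G_adj n r w v"
    by auto
  then have move: "(\<lambda>a c. w a c - v a c) \<in> markov_moves n" unfolding G_adj_def by blast
  have tri: "\<bar>u a c - v a c\<bar> \<le> \<bar>u a c - w a c\<bar> + \<bar>w a c - v a c\<bar>" for a c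
    by linarith
  have "(\<Sum>c<n. \<bar>u a c - v a c\<bar>) \<le> (\<Sum>c<n. \<bar>u a c - w a c\<bar>) + (\<Sum>c<n. \<bar>w a c - v a c\<bar>)"
    unfolding sum.distrib[symmetric] by (rule sum_mono) (rule tri)
  moreover have "(\<Sum>a<n. \<bar>u a c - v a c\<bar>) \<le> (\<Sum>a<n. \<bar>u a c - w a c\<bar>) + (\<Sum>a<n. \<bar>w a c - v a c\<bar>)"
    unfolding sum.distrib[symmetric] by (rule sum_mono) (rule tri)
  ultimately show ?case
    using Suc.IH[OF uw] markov_move_abs_sums(1)[OF move, of a] markov_move_abs_sums(2)[OF move, of c] by simp
qed

lemma sum_lessThan_eq_choose_two: "(\<Sum>k<n. k) = n choose 2"
  by (induction n) (auto simp: numeral_2_eq_2)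

lemma card_image_plus_repeats:
  "card (f ` {..<n}) + card {k. k < n \<and> (\<exists>i<k. f i = f k)} = n"
proof (induction n)
  case 0
  then show ?case by simp
next
  case (Suc n)
  let ?R = "\<lambda>m. {k. k < m \<and> (\<exists>i<k. f i = f k)}"
  have fin: "finite (?R n)" by simp
  show ?case
  proof (cases "f n \<in> f ` {..<n}")
    case True
    then have "?R (Suc n) = insert n (?R n)" "f ` {..<Suc n} = f ` {..<n}"
      by (auto simp: less_Suc_eq lessThan_Suc)
    then show ?thesis using Suc.IH fin by simp
  next
    case False
    then have "?R (Suc n) = ?R n" "f ` {..<Suc n} = insert (f n) (f ` {..<n})"
      by (auto simp: less_Suc_eq lessThan_Suc) (metis image_eqI lessThan_iff)
    then show ?thesis using Suc.IH False by simp
  qed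
qed

(* For f mapping {0..<n} into itself, the number of colliding pairs i < k (f i = f k) is at most
   (n-1) times the number of values missed by f: each collision has a repeated second argument k,
   and there are exactly as many repeated arguments as missed values. *)
lemma card_collisions_le:
  assumes "f ` {..<n} \<subseteq> {..<n}"
  shows "card {(k, i). k < n \<and> i < k \<and> f i = f k} \<le> card ({..<n} - f ` {..<n}) * (n - 1)"
proof -
  define K where "K = {k. k < n \<and> (\<exists>i<k. f i = f k)}"
  have "{(k, i). k < n \<and> i < k \<and> f i = f k} \<subseteq> K \<times> {..<n - 1}"
    unfolding K_def by auto
  moreover have "finite K" unfolding K_def by simp
  ultimately have "card {(k, i). k < n \<and> i < k \<and> f i = f k} \<le> card K * (n - 1)"
    using card_mono[of "K \<times> {..<n - 1}"] by (simp add: card_cartesian_product)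
  moreover have "card ({..<n} - f ` {..<n}) = card K"
    using card_image_plus_repeats[of f n] assms unfolding K_def
    by (simp add: card_Diff_subset finite_subset)
  ultimately show ?thesis by simp
qed

definition indep_edge_pairs :: "nat \<Rightarrow> (nat \<Rightarrow> nat \<Rightarrow> bool) \<Rightarrow> (nat \<times> nat) set set" where
  "indep_edge_pairs n M = {{(i, j), (k, l)} | i j k l.
     i < n \<and> j < n \<and> k < n \<and> l < n \<and> i \<noteq> k \<and> j \<noteq> l \<and> M i j \<and> M k l}"

lemma finite_indep_edge_pairs: "finite (indep_edge_pairs n M)"
proof (rule finite_subset)
  show "indep_edge_pairs n M \<subseteq> Pow ({..<n} \<times> {..<n})"
    unfolding indep_edge_pairs_def by auto
qed simp

lemma chosen_edge_pairs_indep: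
  assumes f: "\<forall>i<n. f i < n \<and> M i (f i)" and \<rho>: "\<forall>c<n. \<rho> c < n \<and> M (\<rho> c) c"
  shows "\<lbrakk>k < n; i < k; f i \<noteq> f k\<rbrakk> \<Longrightarrow> {(i, f i), (k, f k)} \<in> indep_edge_pairs n M"
    and "\<lbrakk>j < n; j \<notin> f ` {..<n}; i < n; i \<noteq> \<rho> j\<rbrakk> \<Longrightarrow> {(\<rho> j, j), (i, f i)} \<in> indep_edge_pairs n M"
proof -
  assume ki: "k < n" "i < k" "f i \<noteq> f k"
  then have "i < n" "f i < n" "f k < n" "M i (f i)" "M k (f k)"
    using f by auto
  with ki show "{(i, f i), (k, f k)} \<in> indep_edge_pairs n M"
    unfolding indep_edge_pairs_def by blast
next
  assume ji: "j < n" "j \<notin> f ` {..<n}" "i < n" "i \<noteq> \<rho> j"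
  then have "\<rho> j < n" "f i < n" "M (\<rho> j) j" "M i (f i)" "j \<noteq> f i"
    using f \<rho> by auto
  with ji show "{(\<rho> j, j), (i, f i)} \<in> indep_edge_pairs n M"
    unfolding indep_edge_pairs_def by blast
qed

(* These pairs are pairwise distinct: the second kind always uses the column j, which the first
   kind never does, and within each kind the parametrisation is injective. *)
lemma card_indep_edge_pairs_lower_bound:
  assumes f: "\<forall>i<n. f i < n \<and> M i (f i)" and \<rho>: "\<forall>c<n. \<rho> c < n \<and> M (\<rho> c) c"
  shows "card {(k, i). k < n \<and> i < k \<and> f i \<noteq> f k} + card ({..<n} - f ` {..<n}) * (n - 1)
           \<le> card (indep_edge_pairs n M)"
proof -
  define J where "J = {..<n} - f ` {..<n}"
  define D1 where "D1 = {(k, i). k < n \<and> i < k \<and> f i \<noteq> f k}"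
  define D2 where "D2 = Sigma J (\<lambda>j. {..<n} - {\<rho> j})"
  define g1 where "g1 = (\<lambda>(k, i). {(i, f i), (k, f k)})"
  define g2 where "g2 = (\<lambda>(j, i). {(\<rho> j, j), (i, f i)})"
  have fin: "finite D1" "finite D2"
    by (auto simp: D1_def D2_def J_def intro: finite_subset[of _ "{..<n} \<times> {..<n}"])
  have "card D2 = card J * (n - 1)"
    unfolding D2_def using \<rho> by (simp add: J_def)
  moreover have "inj_on g1 D1"
  proof (rule inj_onI)
    fix x y assume "x \<in> D1" "y \<in> D1" "g1 x = g1 y"
    then obtain k i k' i' where "x = (k, i)" "y = (k', i')" "i < k" "i' < k'"
      and "{(i, f i), (k, f k)} = {(i', f i'), (k', f k')}"
      unfolding D1_def g1_def by auto
    then show "x = y" by (auto simp: doubleton_eq_iff)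
  qed
  moreover have "inj_on g2 D2"
  proof (rule inj_onI)
    fix x y assume "x \<in> D2" "y \<in> D2" "g2 x = g2 y"
    then obtain j i j' i' where "x = (j, i)" "y = (j', i')" "i < n" "i' < n"
      "j \<notin> f ` {..<n}" "j' \<notin> f ` {..<n}"
      and "{(\<rho> j, j), (i, f i)} = {(\<rho> j', j'), (i', f i')}"
      unfolding D2_def g2_def J_def by auto
    then show "x = y" by (auto simp: doubleton_eq_iff)
  qed
  moreover have "g1 ` D1 \<inter> g2 ` D2 = {}"
  proof -
    have "snd ` g1 x \<subseteq> f ` {..<n}" if "x \<in> D1" for x
      using that by (auto simp: g1_def D1_def)
    moreover have "\<not> snd ` g2 y \<subseteq> f ` {..<n}" if "y \<in> D2" for y
      using that by (auto simp: g2_def D2_def J_def)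
    ultimately have "g1 x \<noteq> g2 y" if "x \<in> D1" "y \<in> D2" for x y
      using that by metis
    then show ?thesis by blast
  qed
  ultimately have "card D1 + card J * (n - 1) = card (g1 ` D1 \<union> g2 ` D2)"
    using fin by (simp add: card_Un_disjoint card_image)
  also have "\<dots> \<le> card (indep_edge_pairs n M)"
  proof (rule card_mono[OF finite_indep_edge_pairs])
    show "g1 ` D1 \<union> g2 ` D2 \<subseteq> indep_edge_pairs n M"
      using chosen_edge_pairs_indep[OF f \<rho>]
      unfolding g1_def g2_def D1_def D2_def J_def by auto
  qed
  finally show ?thesis unfolding D1_def J_def .
qed

(* The pairs of rows i < k are split into those with distinct chosen
   columns, each giving an independent pair, and the collisions, which are outnumbered by the pairs
   of the second kind. *)
lemma card_indep_edge_pairs: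
  fixes M :: "nat \<Rightarrow> nat \<Rightarrow> bool"
  assumes rows: "\<forall>i<n. \<exists>c<n. M i c" and cols: "\<forall>c<n. \<exists>i<n. M i c"
  shows "n choose 2 \<le> card (indep_edge_pairs n M)"
proof -
  obtain f where f: "\<forall>i<n. f i < n \<and> M i (f i)" using rows by metis
  obtain \<rho> where \<rho>: "\<forall>c<n. \<rho> c < n \<and> M (\<rho> c) c" using cols by metis
  define D1 where "D1 = {(k, i). k < n \<and> i < k \<and> f i \<noteq> f k}"
  define E where "E = {(k, i). k < n \<and> i < k \<and> f i = f k}"
  have "D1 \<union> E = Sigma {..<n} (\<lambda>k. {..<k})" "D1 \<inter> E = {}"
    by (auto simp: D1_def E_def)
  moreover have "finite D1" "finite E"
    by (auto simp: D1_def E_def intro: finite_subset[of _ "{..<n} \<times> {..<n}"])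
  ultimately have "card D1 + card E = card (Sigma {..<n} (\<lambda>k. {..<k}))"
    using card_Un_disjoint[of D1 E] by simp
  also have "\<dots> = n choose 2"
    by (simp add: sum_lessThan_eq_choose_two)
  finally have "n choose 2 = card D1 + card E" ..
  also have "\<dots> \<le> card D1 + card ({..<n} - f ` {..<n}) * (n - 1)"
    using card_collisions_le[of f n] f unfolding E_def by auto
  also have "\<dots> \<le> card (indep_edge_pairs n M)"
    using card_indep_edge_pairs_lower_bound[OF f \<rho>] unfolding D1_def .
  finally show ?thesis .
qed

(* Two non-negative integer vectors whose l1-distance is smaller than the sum of their l1-norms
   have a common positive entry: otherwise x c + y c = |x c - y c| everywhere. *)
lemma common_positive_entry:
  fixes x y :: "nat \<Rightarrow> int"
  assumes "\<forall>c. x c \<ge> 0" "\<forall>c. y c \<ge> 0"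
    and "(\<Sum>c<n. \<bar>x c - y c\<bar>) < (\<Sum>c<n. x c) + (\<Sum>c<n. y c)"
  shows "\<exists>c<n. x c \<ge> 1 \<and> y c \<ge> 1"
proof (rule ccontr)
  assume no_common: "\<not> (\<exists>c<n. x c \<ge> 1 \<and> y c \<ge> 1)"
  have "x c + y c \<le> \<bar>x c - y c\<bar>" if "c < n" for c
  proof -
    have "\<not> (x c \<ge> 1 \<and> y c \<ge> 1)" "x c \<ge> 0" "y c \<ge> 0"
      using that assms(1,2) no_common by auto
    then have "x c = 0 \<or> y c = 0" by linarith
    then show ?thesis using \<open>x c \<ge> 0\<close> \<open>y c \<ge> 0\<close> by auto
  qed
  then have "(\<Sum>c<n. x c) + (\<Sum>c<n. y c) \<le> (\<Sum>c<n. \<bar>x c - y c\<bar>)"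
    unfolding sum.distrib[symmetric] by (intro sum_mono) simp
  with assms(3) show False by simp
qed

(* Vertices of G(n,r) at distance d < r share a positive entry in every row and every column:
   their rows and columns have l1-norm r each but differ by at most 2d < 2r. *)
lemma close_vertices_common_support:
  assumes "is_vertex n r u" "is_vertex n r v" "G_dist_le n r u v d" "d < r"
  shows "\<forall>a<n. \<exists>c<n. u a c \<ge> 1 \<and> v a c \<ge> 1"
    and "\<forall>c<n. \<exists>a<n. u a c \<ge> 1 \<and> v a c \<ge> 1"
proof -
  obtain k where "k \<le> d" and walk: "(u, v) \<in> {(x, y). G_adj n r x y} ^^ k"
    using assms(3) unfolding G_dist_le_def by blast
  then have small: "(\<Sum>c<n. \<bar>u a c - v a c\<bar>) < 2 * int r"
    "(\<Sum>a<n. \<bar>u a c - v a c\<bar>) < 2 * int r" for a c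
    using walk_abs_sums[OF walk, of a c] assms(4) by linarith+
  have nonneg: "\<forall>a c. u a c \<ge> 0" "\<forall>a c. v a c \<ge> 0"
    using assms(1,2) unfolding is_vertex_def by blast+
  show "\<forall>a<n. \<exists>c<n. u a c \<ge> 1 \<and> v a c \<ge> 1"
  proof (intro allI impI)
    fix a assume "a < n"
    then have "(\<Sum>c<n. u a c) = int r" "(\<Sum>c<n. v a c) = int r"
      using assms(1,2) unfolding is_vertex_def by blast+
    then show "\<exists>c<n. u a c \<ge> 1 \<and> v a c \<ge> 1"
      using common_positive_entry[of "u a" "v a" n] nonneg small(1)[of a] by simp
  qed
  show "\<forall>c<n. \<exists>a<n. u a c \<ge> 1 \<and> v a c \<ge> 1"
  proof (intro allI impI)
    fix c assume "c < n"
    then have "(\<Sum>a<n. u a c) = int r" "(\<Sum>a<n. v a c) = int r"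
      using assms(1,2) unfolding is_vertex_def by blast+
    then show "\<exists>a<n. u a c \<ge> 1 \<and> v a c \<ge> 1"
      using common_positive_entry[of "\<lambda>a. u a c" "\<lambda>a. v a c" n] nonneg small(2)[of c] by simp
  qed
qed

definition joint_moves :: "nat \<Rightarrow> (nat \<Rightarrow> nat \<Rightarrow> int) \<Rightarrow> (nat \<Rightarrow> nat \<Rightarrow> int) \<Rightarrow> (nat \<Rightarrow> nat \<Rightarrow> int) set" where
  "joint_moves n u v =
     {b \<in> markov_moves n. (\<forall>a c. u a c + b a c \<ge> 0) \<and> (\<forall>a c. v a c + b a c \<ge> 0)}"

lemma indep_pairs_in_joint_moves:
  assumes "\<forall>a c. u a c \<ge> 0" "\<forall>a c. v a c \<ge> 0"
  shows "indep_edge_pairs n (\<lambda>a c. u a c \<ge> 1 \<and> v a c \<ge> 1) \<subseteq> neg_support ` joint_moves n u v"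
proof
  fix p assume "p \<in> indep_edge_pairs n (\<lambda>a c. u a c \<ge> 1 \<and> v a c \<ge> 1)"
  then obtain i j k l where p: "p = {(i, j), (k, l)}"
    and idx: "i < n" "j < n" "k < n" "l < n" "i \<noteq> k" "j \<noteq> l"
    and common: "u i j \<ge> 1" "v i j \<ge> 1" "u k l \<ge> 1" "v k l \<ge> 1"
    unfolding indep_edge_pairs_def by blast
  have "swap_move i j k l \<in> joint_moves n u v"
    unfolding joint_moves_def
    using swap_move_in_markov_moves[OF idx(1,3,2,4,5,6)]
      swap_move_keeps_nonneg[OF assms(1) common(1,3) idx(5,6)]
      swap_move_keeps_nonneg[OF assms(2) common(2,4) idx(5,6)] by simp
  moreover have "neg_support (swap_move i j k l) = p"
    using neg_support_swap_move[OF idx(5,6)] p by simp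
  ultimately show "p \<in> neg_support ` joint_moves n u v" by blast
qed

theorem lemma2p4:
  fixes n r :: nat and u v :: "nat \<Rightarrow> nat \<Rightarrow> int"
  assumes "n \<ge> 2" and "r > 2"
    and "is_vertex n r u" and "is_vertex n r v"
    and "G_dist_le n r u v 2"
  shows "card {b \<in> markov_moves n. (\<forall>a c. u a c + b a c \<ge> 0) \<and> (\<forall>a c. v a c + b a c \<ge> 0)}
           \<ge> n choose 2"
proof -
  let ?common = "\<lambda>a c. u a c \<ge> 1 \<and> v a c \<ge> 1"
  have nonneg: "\<forall>a c. u a c \<ge> 0" "\<forall>a c. v a c \<ge> 0"
    using assms(3,4) unfolding is_vertex_def by blast+
  have finite_joint: "finite (joint_moves n u v)"
    unfolding joint_moves_def using finite_markov_moves by simp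
  have "n choose 2 \<le> card (indep_edge_pairs n ?common)"
    using card_indep_edge_pairs close_vertices_common_support[OF assms(3,4,5,2)] .
  also have "\<dots> \<le> card (neg_support ` joint_moves n u v)"
    using indep_pairs_in_joint_moves[OF nonneg] finite_joint by (simp add: card_mono)
  also have "\<dots> \<le> card (joint_moves n u v)"
    by (rule card_image_le[OF finite_joint])
  finally show ?thesis unfolding joint_moves_def .
qed


end
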